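(* If graded posets $(P,\le_P)$ and $(Q,\le_Q)$ each admit a symmetric boolean decomposition, then the product poset $(P\times Q,\le_{P\times Q})$ admits a symmetric boolean decomposition.
   Context: The product order is $(p,q)\le_{P\times Q}(p',q')$ iff $p\le_P p'$ and $q\le_Q q'$; if $P,Q$ are graded of ranks $m,n$ then $P\times Q$ is graded of rank $m+n$ with $\mathrm{rk}(p,q)=\mathrm{rk}(p)+\mathrm{rk}(q)$. Let $\mathrm B_m$ be the boolean lattice of subsets of an $m$-element set. For a graded poset $R$ of rank $N$, a partition $\{R_1,\dots,R_k\}$ of $R$ is a symmetric boolean decomposition if for each $i$ there is an integer $j$ with $0\le j\le N/2$ and a bijection $\rho_i:\mathrm B_{N-2j}\to R_i$ that sends cover relations of $\mathrm B_{N-2j}$ to cover relations of $R$ and sends elements of rank $r$ to elements of rank $j+r$ in $R$. *)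

theory Defs
  imports Main "HOL-Library.Disjoint_Sets"
begin

definition partial_order_on_set :: "'a set \<Rightarrow> ('a \<Rightarrow> 'a \<Rightarrow> bool) \<Rightarrow> bool" where
  "partial_order_on_set R le \<longleftrightarrow>
     (\<forall>x\<in>R. le x x) \<and>
     (\<forall>x\<in>R. \<forall>y\<in>R. le x y \<and> le y x \<longrightarrow> x = y) \<and>
     (\<forall>x\<in>R. \<forall>y\<in>R. \<forall>z\<in>R. le x y \<and> le y z \<longrightarrow> le x z)"

definition covers :: "'a set \<Rightarrow> ('a \<Rightarrow> 'a \<Rightarrow> bool) \<Rightarrow> 'a \<Rightarrow> 'a \<Rightarrow> bool" where
  "covers R le x y \<longleftrightarrow> x \<in> R \<and> y \<in> R \<and> le x y \<and> x \<noteq> y \<and>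
     \<not> (\<exists>z\<in>R. le x z \<and> le z y \<and> z \<noteq> x \<and> z \<noteq> y)"

text \<open>Finite graded poset of rank N with rank function rk: minimal elements have
  rank 0, maximal elements have rank N, and covers raise the rank by one
  (equivalently, all maximal chains have length N).\<close>
definition graded_poset :: "'a set \<Rightarrow> ('a \<Rightarrow> 'a \<Rightarrow> bool) \<Rightarrow> ('a \<Rightarrow> nat) \<Rightarrow> nat \<Rightarrow> bool" where
  "graded_poset R le rk N \<longleftrightarrow>
     partial_order_on_set R le \<and> finite R \<and>
     (\<forall>x\<in>R. rk x \<le> N) \<and>
     (\<forall>x\<in>R. (\<forall>y\<in>R. le y x \<longrightarrow> y = x) \<longrightarrow> rk x = 0) \<and>
     (\<forall>x\<in>R. (\<forall>y\<in>R. le x y \<longrightarrow> y = x) \<longrightarrow> rk x = N) \<and>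
     (\<forall>x y. covers R le x y \<longrightarrow> rk y = rk x + 1)"

text \<open>Boolean lattice B_m: subsets of {0..<m} ordered by inclusion, rank = cardinality.\<close>
definition boolean_lattice :: "nat \<Rightarrow> nat set set" where
  "boolean_lattice m = Pow {0..<m}"

definition symmetric_boolean_decomposition ::
  "'a set \<Rightarrow> ('a \<Rightarrow> 'a \<Rightarrow> bool) \<Rightarrow> ('a \<Rightarrow> nat) \<Rightarrow> nat \<Rightarrow> 'a set set \<Rightarrow> bool" where
  "symmetric_boolean_decomposition R le rk N D \<longleftrightarrow>
     partition_on R D \<and>
     (\<forall>S\<in>D. \<exists>j::nat. 2 * j \<le> N \<and>
        (\<exists>\<rho> :: nat set \<Rightarrow> 'a.
           bij_betw \<rho> (boolean_lattice (N - 2 * j)) S \<and>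
           (\<forall>A B. covers (boolean_lattice (N - 2 * j)) (\<subseteq>) A B \<longrightarrow> covers R le (\<rho> A) (\<rho> B)) \<and>
           (\<forall>A\<in>boolean_lattice (N - 2 * j). rk (\<rho> A) = j + card A)))"

definition admits_sbd :: "'a set \<Rightarrow> ('a \<Rightarrow> 'a \<Rightarrow> bool) \<Rightarrow> ('a \<Rightarrow> nat) \<Rightarrow> nat \<Rightarrow> bool" where
  "admits_sbd R le rk N \<longleftrightarrow> (\<exists>D. symmetric_boolean_decomposition R le rk N D)"

definition prod_le :: "('a \<Rightarrow> 'a \<Rightarrow> bool) \<Rightarrow> ('b \<Rightarrow> 'b \<Rightarrow> bool) \<Rightarrow> 'a \<times> 'b \<Rightarrow> 'a \<times> 'b \<Rightarrow> bool" where
  "prod_le leP leQ x y \<longleftrightarrow> leP (fst x) (fst y) \<and> leQ (snd x) (snd y)"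

definition prod_rk :: "('a \<Rightarrow> nat) \<Rightarrow> ('b \<Rightarrow> nat) \<Rightarrow> 'a \<times> 'b \<Rightarrow> nat" where
  "prod_rk rkP rkQ x = rkP (fst x) + rkQ (snd x)"

end

theory Submission
  imports Defs
begin

(* Let D1, D2 be symmetric boolean decompositions of P (rank m) and Q (rank n).
   The blocks S \<times> T (S \<in> D1, T \<in> D2) partition P \<times> Q.  If S is the image of
   B_a (a = m - 2j) and T the image of B_b (b = n - 2k), then S \<times> T is the
   image of B_a \<times> B_b, which is identified with B_{a+b} by splitting a subset
   of {0..<a+b} into its part below a and its (shifted) part from a on.
   A cover in B_{a+b} adds one element, hence changes exactly one of the two
   halves by a cover; a cover in one factor of a poset product (with the other
   coordinate fixed) is a cover of the product; and ranks add up, so the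
   block S \<times> T has offset j + k and m + n - 2(j + k) = a + b. *)

lemma covers_Pow_iff:
  "covers (Pow U) (\<subseteq>) A B \<longleftrightarrow> A \<subseteq> U \<and> (\<exists>x\<in>U. x \<notin> A \<and> B = insert x A)"
proof
  assume "covers (Pow U) (\<subseteq>) A B"
  then have sub: "A \<subseteq> B" "A \<noteq> B" "B \<subseteq> U"
    and no_between: "\<not> (\<exists>z\<in>Pow U. A \<subseteq> z \<and> z \<subseteq> B \<and> z \<noteq> A \<and> z \<noteq> B)"
    unfolding covers_def by auto
  then obtain x where x: "x \<in> B" "x \<notin> A" by blast
  \<comment> \<open>insert x A lies between A and B and differs from A, so it must be B\<close>
  have "insert x A = B"
    using no_between sub x by (metis Pow_iff insert_subset subset_trans subset_insertI insertI1)
  then show "A \<subseteq> U \<and> (\<exists>x\<in>U. x \<notin> A \<and> B = insert x A)" using sub x by auto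
next
  assume "A \<subseteq> U \<and> (\<exists>x\<in>U. x \<notin> A \<and> B = insert x A)"
  then obtain x where "A \<subseteq> U" "x \<in> U" "x \<notin> A" "B = insert x A" by blast
  moreover have "z = A \<or> z = insert x A" if "A \<subseteq> z" "z \<subseteq> insert x A" for z
    using that by blast
  ultimately show "covers (Pow U) (\<subseteq>) A B" unfolding covers_def by auto
qed

definition split_set :: "nat \<Rightarrow> nat set \<Rightarrow> nat set \<times> nat set" where
  "split_set a A = (A \<inter> {0..<a}, (\<lambda>x. x - a) ` (A - {0..<a}))"

lemma split_set_bij:
  "bij_betw (split_set a) (Pow {0..<a+b}) (Pow {0..<a} \<times> Pow {0..<b})"
proof (rule bij_betw_byWitness[where f' = "\<lambda>(X, Y). X \<union> (\<lambda>x. x + a) ` Y"])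
  show "\<forall>A\<in>Pow {0..<a+b}. (\<lambda>(X, Y). X \<union> (\<lambda>x. x + a) ` Y) (split_set a A) = A"
  proof
    fix A
    have "(\<lambda>x. x + a) ` (\<lambda>x. x - a) ` (A - {0..<a}) = A - {0..<a}"
      by (auto simp: image_image image_iff)
    then show "(\<lambda>(X, Y). X \<union> (\<lambda>x. x + a) ` Y) (split_set a A) = A"
      by (auto simp: split_set_def)
  qed
  show "\<forall>p\<in>Pow {0..<a} \<times> Pow {0..<b}. split_set a ((\<lambda>(X, Y). X \<union> (\<lambda>x. x + a) ` Y) p) = p"
  proof
    fix p assume p: "p \<in> Pow {0..<a} \<times> Pow {0..<b}"
    obtain X Y where [simp]: "p = (X, Y)" by fastforce
    have "(X \<union> (\<lambda>x. x + a) ` Y) \<inter> {0..<a} = X"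
      and "(X \<union> (\<lambda>x. x + a) ` Y) - {0..<a} = (\<lambda>x. x + a) ` Y"
      using p by auto
    then show "split_set a ((\<lambda>(X, Y). X \<union> (\<lambda>x. x + a) ` Y) p) = p"
      by (simp add: split_set_def image_image)
  qed
qed (auto simp: split_set_def)

lemma card_split_set:
  assumes "finite A"
  shows "card (fst (split_set a A)) + card (snd (split_set a A)) = card A"
proof -
  have "inj_on (\<lambda>x. x - a) (A - {0..<a})" by (auto simp: inj_on_def)
  then have "card ((\<lambda>x. x - a) ` (A - {0..<a})) = card (A - {0..<a})" by (rule card_image)
  with card_Int_Diff[OF assms] show ?thesis by (simp add: split_set_def)
qed

lemma covers_split_set:
  assumes "covers (Pow {0..<a+b}) (\<subseteq>) A B"
  shows "(covers (Pow {0..<a}) (\<subseteq>) (fst (split_set a A)) (fst (split_set a B))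
            \<and> snd (split_set a B) = snd (split_set a A))
       \<or> (fst (split_set a B) = fst (split_set a A)
            \<and> covers (Pow {0..<b}) (\<subseteq>) (snd (split_set a A)) (snd (split_set a B)))"
proof -
  obtain x where x: "A \<subseteq> {0..<a+b}" "x < a + b" "x \<notin> A" "B = insert x A"
    using assms unfolding covers_Pow_iff by auto
  show ?thesis
  proof (cases "x < a")
    case True
    then have "fst (split_set a B) = insert x (fst (split_set a A))"
      and "snd (split_set a B) = snd (split_set a A)"
      using x by (auto simp: split_set_def)
    then show ?thesis
      using True x by (auto simp: covers_Pow_iff split_set_def)
  next
    case False
    have fresh: "x - a \<notin> snd (split_set a A)"
    proof
      assume "x - a \<in> snd (split_set a A)"
      then obtain y where "y \<in> A" "a \<le> y" "x - a = y - a" by (auto simp: split_set_def)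
      then have "y = x" using False by simp
      with \<open>y \<in> A\<close> x show False by simp
    qed
    have "fst (split_set a B) = fst (split_set a A)"
      and "snd (split_set a B) = insert (x - a) (snd (split_set a A))"
      using False x by (auto simp: split_set_def)
    then show ?thesis
      using False x fresh by (auto simp: covers_Pow_iff split_set_def)
  qed
qed

text \<open>Reflexivity and antisymmetry in
  the second factor make the second coordinate of any intermediate element
  equal to q.\<close>
lemma covers_prod_fst:
  assumes "partial_order_on_set Q leQ" and "covers P leP p p'" and "q \<in> Q"
  shows "covers (P \<times> Q) (prod_le leP leQ) (p, q) (p', q)"
proof -
  have "leQ q q" and antisym: "\<And>z. z \<in> Q \<Longrightarrow> leQ q z \<Longrightarrow> leQ z q \<Longrightarrow> z = q"
    using assms(1,3) unfolding partial_order_on_set_def by blast+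
  with assms(2,3) show ?thesis
    unfolding covers_def prod_le_def by (auto dest: antisym)
qed

lemma covers_prod_snd:
  assumes "partial_order_on_set P leP" and "covers Q leQ q q'" and "p \<in> P"
  shows "covers (P \<times> Q) (prod_le leP leQ) (p, q) (p, q')"
proof -
  have "leP p p" and antisym: "\<And>z. z \<in> P \<Longrightarrow> leP p z \<Longrightarrow> leP z p \<Longrightarrow> z = p"
    using assms(1,3) unfolding partial_order_on_set_def by blast+
  with assms(2,3) show ?thesis
    unfolding covers_def prod_le_def by (auto dest: antisym)
qed

lemma partition_on_Times:
  assumes "partition_on P D1" and "partition_on Q D2"
  shows "partition_on (P \<times> Q) ((\<lambda>(S, T). S \<times> T) ` (D1 \<times> D2))"
proof (rule partition_onI)
  show "\<Union> ((\<lambda>(S, T). S \<times> T) ` (D1 \<times> D2)) = P \<times> Q"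
    using partition_onD1[OF assms(1)] partition_onD1[OF assms(2)] by auto
  show "{} \<notin> (\<lambda>(S, T). S \<times> T) ` (D1 \<times> D2)"
    using partition_onD3[OF assms(1)] partition_onD3[OF assms(2)]
    by (auto simp: eq_commute[of "{}"])
next
  fix U V
  assume "U \<in> (\<lambda>(S, T). S \<times> T) ` (D1 \<times> D2)" "V \<in> (\<lambda>(S, T). S \<times> T) ` (D1 \<times> D2)" "U \<noteq> V"
  then obtain S T S' T' where blocks: "S \<in> D1" "T \<in> D2" "S' \<in> D1" "T' \<in> D2"
    "U = S \<times> T" "V = S' \<times> T'" "S \<noteq> S' \<or> T \<noteq> T'" by auto
  then have "disjnt S S' \<or> disjnt T T'"
    using partition_onD2[OF assms(1)] partition_onD2[OF assms(2)]
    by (auto dest: pairwiseD)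
  with blocks show "disjnt U V" by (auto simp: disjnt_def)
qed

definition boolean_block ::
  "'a set \<Rightarrow> ('a \<Rightarrow> 'a \<Rightarrow> bool) \<Rightarrow> ('a \<Rightarrow> nat) \<Rightarrow> nat \<Rightarrow> nat \<Rightarrow> 'a set \<Rightarrow> bool" where
  "boolean_block R le rk j d S \<longleftrightarrow>
     (\<exists>\<rho> :: nat set \<Rightarrow> 'a. bij_betw \<rho> (boolean_lattice d) S \<and>
        (\<forall>A B. covers (boolean_lattice d) (\<subseteq>) A B \<longrightarrow> covers R le (\<rho> A) (\<rho> B)) \<and>
        (\<forall>A\<in>boolean_lattice d. rk (\<rho> A) = j + card A))"

lemma symmetric_boolean_decomposition_iff:
  "symmetric_boolean_decomposition R le rk N D \<longleftrightarrow>
     partition_on R D \<and> (\<forall>S\<in>D. \<exists>j. 2 * j \<le> N \<and> boolean_block R le rk j (N - 2 * j) S)"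
  unfolding symmetric_boolean_decomposition_def boolean_block_def ..

text \<open>The product of two boolean blocks is a boolean block: offsets and
  dimensions add.  The parametrisation is \<rho>1 \<times> \<rho>2 composed with the
  splitting of B_{a+b}.\<close>
lemma boolean_block_Times:
  assumes poP: "partial_order_on_set P leP" and poQ: "partial_order_on_set Q leQ"
    and "S \<subseteq> P" and "T \<subseteq> Q"
    and "boolean_block P leP rkP j a S" and "boolean_block Q leQ rkQ k b T"
  shows "boolean_block (P \<times> Q) (prod_le leP leQ) (prod_rk rkP rkQ) (j + k) (a + b) (S \<times> T)"
proof -
  obtain \<rho>1 where bij1: "bij_betw \<rho>1 (Pow {0..<a}) S"
    and cov1: "\<And>A B. covers (Pow {0..<a}) (\<subseteq>) A B \<Longrightarrow> covers P leP (\<rho>1 A) (\<rho>1 B)"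
    and rk1: "\<And>A. A \<in> Pow {0..<a} \<Longrightarrow> rkP (\<rho>1 A) = j + card A"
    using assms(5) unfolding boolean_block_def boolean_lattice_def by blast
  obtain \<rho>2 where bij2: "bij_betw \<rho>2 (Pow {0..<b}) T"
    and cov2: "\<And>A B. covers (Pow {0..<b}) (\<subseteq>) A B \<Longrightarrow> covers Q leQ (\<rho>2 A) (\<rho>2 B)"
    and rk2: "\<And>A. A \<in> Pow {0..<b} \<Longrightarrow> rkQ (\<rho>2 A) = k + card A"
    using assms(6) unfolding boolean_block_def boolean_lattice_def by blast
  define \<rho> where "\<rho> = map_prod \<rho>1 \<rho>2 \<circ> split_set a"
  have halves: "fst (split_set a A) \<in> Pow {0..<a}" "snd (split_set a A) \<in> Pow {0..<b}"
    if "A \<in> Pow {0..<a+b}" for A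
    using that by (auto simp: split_set_def)
  have in_P: "\<rho>1 X \<in> P" if "X \<in> Pow {0..<a}" for X
    using that bij1 assms(3) by (auto simp: bij_betw_def)
  have in_Q: "\<rho>2 Y \<in> Q" if "Y \<in> Pow {0..<b}" for Y
    using that bij2 assms(4) by (auto simp: bij_betw_def)
  have "bij_betw \<rho> (Pow {0..<a+b}) (S \<times> T)"
    unfolding \<rho>_def using split_set_bij bij_betw_map_prod[OF bij1 bij2] by (rule bij_betw_trans)
  moreover have "covers (P \<times> Q) (prod_le leP leQ) (\<rho> A) (\<rho> B)"
    if AB: "covers (Pow {0..<a+b}) (\<subseteq>) A B" for A B
  proof -
    have A: "A \<in> Pow {0..<a+b}" using AB unfolding covers_def by blast
    from covers_split_set[OF AB] show ?thesis
    proof (elim disjE conjE)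
      assume "covers (Pow {0..<a}) (\<subseteq>) (fst (split_set a A)) (fst (split_set a B))"
        and "snd (split_set a B) = snd (split_set a A)"
      with covers_prod_fst[OF poQ cov1 in_Q[OF halves(2)[OF A]]] show ?thesis
        by (simp add: \<rho>_def map_prod_def split_def)
    next
      assume "fst (split_set a B) = fst (split_set a A)"
        and "covers (Pow {0..<b}) (\<subseteq>) (snd (split_set a A)) (snd (split_set a B))"
      with covers_prod_snd[OF poP cov2 in_P[OF halves(1)[OF A]]] show ?thesis
        by (simp add: \<rho>_def map_prod_def split_def)
    qed
  qed
  moreover have "prod_rk rkP rkQ (\<rho> A) = (j + k) + card A" if "A \<in> Pow {0..<a+b}" for A
    using rk1 rk2 halves[OF that] card_split_set[of A a] finite_subset[of A "{0..<a+b}"] that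
    unfolding \<rho>_def prod_rk_def by (auto simp: split_def map_prod_def)
  ultimately show ?thesis
    unfolding boolean_block_def boolean_lattice_def by blast
qed

lemma symmetric_boolean_decomposition_Times:
  assumes "partial_order_on_set P leP" and "partial_order_on_set Q leQ"
    and D1: "symmetric_boolean_decomposition P leP rkP m D1"
    and D2: "symmetric_boolean_decomposition Q leQ rkQ n D2"
  shows "symmetric_boolean_decomposition (P \<times> Q) (prod_le leP leQ) (prod_rk rkP rkQ) (m + n)
           ((\<lambda>(S, T). S \<times> T) ` (D1 \<times> D2))"
  unfolding symmetric_boolean_decomposition_iff
proof (intro conjI ballI)
  have part1: "partition_on P D1" and part2: "partition_on Q D2"
    using D1 D2 unfolding symmetric_boolean_decomposition_iff by blast+
  then show "partition_on (P \<times> Q) ((\<lambda>(S, T). S \<times> T) ` (D1 \<times> D2))"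
    by (rule partition_on_Times)
  fix U assume "U \<in> (\<lambda>(S, T). S \<times> T) ` (D1 \<times> D2)"
  then obtain S T where ST: "S \<in> D1" "T \<in> D2" "U = S \<times> T" by auto
  obtain j where j: "2 * j \<le> m" "boolean_block P leP rkP j (m - 2 * j) S"
    using D1 ST(1) unfolding symmetric_boolean_decomposition_iff by blast
  obtain k where k: "2 * k \<le> n" "boolean_block Q leQ rkQ k (n - 2 * k) T"
    using D2 ST(2) unfolding symmetric_boolean_decomposition_iff by blast
  have "S \<subseteq> P" "T \<subseteq> Q"
    using ST partition_onD1[OF part1] partition_onD1[OF part2] by auto
  from boolean_block_Times[OF assms(1,2) this j(2) k(2)]
  have "boolean_block (P \<times> Q) (prod_le leP leQ) (prod_rk rkP rkQ) (j + k)
          (m + n - 2 * (j + k)) U"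
    using j(1) k(1) ST(3) by (simp add: algebra_simps)
  moreover have "2 * (j + k) \<le> m + n" using j(1) k(1) by simp
  ultimately show "\<exists>i. 2 * i \<le> m + n \<and>
      boolean_block (P \<times> Q) (prod_le leP leQ) (prod_rk rkP rkQ) i (m + n - 2 * i) U"
    by blast
qed

theorem mainTheorem16:
  fixes P :: "'a set" and leP :: "'a \<Rightarrow> 'a \<Rightarrow> bool" and rkP :: "'a \<Rightarrow> nat"
    and Q :: "'b set" and leQ :: "'b \<Rightarrow> 'b \<Rightarrow> bool" and rkQ :: "'b \<Rightarrow> nat"
    and m n :: nat
  assumes "graded_poset P leP rkP m"
    and "graded_poset Q leQ rkQ n"
    and "admits_sbd P leP rkP m"
    and "admits_sbd Q leQ rkQ n"
  shows "admits_sbd (P \<times> Q) (prod_le leP leQ) (prod_rk rkP rkQ) (m + n)"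
proof -
  have "partial_order_on_set P leP" "partial_order_on_set Q leQ"
    using assms(1,2) unfolding graded_poset_def by blast+
  moreover obtain D1 D2 where "symmetric_boolean_decomposition P leP rkP m D1"
    and "symmetric_boolean_decomposition Q leQ rkQ n D2"
    using assms(3,4) unfolding admits_sbd_def by blast
  ultimately show ?thesis
    unfolding admits_sbd_def by (blast intro: symmetric_boolean_decomposition_Times)
qed

end
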